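(* Let $\mathcal M$ be the set of all episodic MDPs with rewards bounded in $[-R_{\max},R_{\max}]$ satisfying $\sum_{t=0}^\infty\Pr(S_t\neq s_\infty)<\infty$ for every policy $\pi$. Then for every $\gamma<1$ there is no objective $J_?$ (assigning to each MDP $M\in\mathcal M$ and differentiable parameterized policy $\pi^\theta$ a real-valued function of $\theta$) such that for all $M\in\mathcal M$, $$\nabla J_?(\theta)=\mathbb E\left[\sum_{t=0}^{\infty}\psi^\theta(S_t,A_t)\,Q^\theta_\gamma(S_t,A_t)\,\middle|\,\theta\right].$$
   Context: An MDP is a tuple $(\mathcal S,\mathcal A,P,R,d_0,\gamma)$ with discrete state set $\mathcal S$, discrete action set $\mathcal A$, transition function $P:\mathcal S\times\mathcal A\times\mathcal S\to[0,1]$, expected reward function $R:\mathcal S\times\mathcal A\to[-R_{\max},R_{\max}]$, initial state distribution $d_0$, and discount factor $\gamma\in[0,1]$. At each time $t=0,1,2,\dots$ the agent observes $S_t$ (with $S_0\sim d_0$), takes $A_t\sim\pi^\theta(S_t,\cdot)$, transitions to $S_{t+1}\sim P(S_t,A_t,\cdot)$, and receives reward $R_t$ with expectation $R(S_t,A_t)$. Episodic: there is a terminal absorbing state $s_\infty$ which, once entered, is never left and yields reward $0$ forever. A parameterized policy $\pi^\theta:\mathcal S\times\mathcal A\to[0,1]$ gives action probabilities as a function of a parameter vector $\theta$; conditioning on $\theta$ means actions are drawn from $\pi^\theta$. Compatible features: $\psi^\theta(s,a):=\frac{\partial}{\partial\theta}\ln\pi^\theta(s,a)$. Action-value function: $Q^\theta_\gamma(s,a):=\mathbb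 E[\sum_{k=0}^\infty\gamma^kR_{t+k}\mid S_t=s,A_t=a,\theta]$. Here $\nabla$ denotes the gradient with respect to $\theta$. *)

theory Defs
  imports "HOL-Analysis.Analysis" "HOL-Probability.Probability"
begin

text \<open>Episodic MDPs with discrete (countable) state and action sets, realised as
  subsets of nat.  Tr s a is the next-state distribution P(s,a,.), Rw s a the expected
  reward R(s,a), D0 the initial state distribution, Term the terminal absorbing state
  s_infinity, Disc the discount factor gamma.\<close>

record mdp =
  St   :: "nat set"
  Ac   :: "nat set"
  Tr   :: "nat \<Rightarrow> nat \<Rightarrow> nat pmf"
  Rw   :: "nat \<Rightarrow> nat \<Rightarrow> real"
  D0   :: "nat pmf"
  Term :: nat
  Disc :: real

definition is_policy :: "mdp \<Rightarrow> (nat \<Rightarrow> nat pmf) \<Rightarrow> bool" where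
  "is_policy M \<pi> \<longleftrightarrow> (\<forall>s\<in>St M. set_pmf (\<pi> s) \<subseteq> Ac M)"

definition sa_step :: "mdp \<Rightarrow> (nat \<Rightarrow> nat pmf) \<Rightarrow> nat \<times> nat \<Rightarrow> (nat \<times> nat) pmf" where
  "sa_step M \<pi> x = bind_pmf (Tr M (fst x) (snd x)) (\<lambda>s'. map_pmf (\<lambda>a'. (s', a')) (\<pi> s'))"

primrec sa_from :: "mdp \<Rightarrow> (nat \<Rightarrow> nat pmf) \<Rightarrow> (nat \<times> nat) pmf \<Rightarrow> nat \<Rightarrow> (nat \<times> nat) pmf" where
  "sa_from M \<pi> d 0 = d"
| "sa_from M \<pi> d (Suc t) = bind_pmf (sa_from M \<pi> d t) (sa_step M \<pi>)"

definition sa_dist :: "mdp \<Rightarrow> (nat \<Rightarrow> nat pmf) \<Rightarrow> nat \<Rightarrow> (nat \<times> nat) pmf" where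
  "sa_dist M \<pi> t = sa_from M \<pi> (bind_pmf (D0 M) (\<lambda>s. map_pmf (\<lambda>a. (s, a)) (\<pi> s))) t"

definition prob_nonterm :: "mdp \<Rightarrow> (nat \<Rightarrow> nat pmf) \<Rightarrow> nat \<Rightarrow> real" where
  "prob_nonterm M \<pi> t = measure_pmf.prob (sa_dist M \<pi> t) {x. fst x \<noteq> Term M}"

definition episodic_mdp :: "real \<Rightarrow> real \<Rightarrow> mdp \<Rightarrow> bool" where
  "episodic_mdp Rmax \<gamma> M \<longleftrightarrow>
     Disc M = \<gamma> \<and>
     Ac M \<noteq> {} \<and>
     Term M \<in> St M \<and>
     set_pmf (D0 M) \<subseteq> St M \<and>
     (\<forall>s\<in>St M. \<forall>a\<in>Ac M. set_pmf (Tr M s a) \<subseteq> St M) \<and>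
     (\<forall>s\<in>St M. \<forall>a\<in>Ac M. \<bar>Rw M s a\<bar> \<le> Rmax) \<and>
     (\<forall>a\<in>Ac M. Tr M (Term M) a = return_pmf (Term M)) \<and>
     (\<forall>a\<in>Ac M. Rw M (Term M) a = 0)"

definition mdp_class :: "real \<Rightarrow> real \<Rightarrow> mdp set" where
  "mdp_class Rmax \<gamma> = {M. episodic_mdp Rmax \<gamma> M \<and>
      (\<forall>\<pi>. is_policy M \<pi> \<longrightarrow> summable (prob_nonterm M \<pi>))}"

definition Qfun :: "mdp \<Rightarrow> (nat \<Rightarrow> nat pmf) \<Rightarrow> nat \<Rightarrow> nat \<Rightarrow> real" where
  "Qfun M \<pi> s a = (\<Sum>k. Disc M ^ k *
      measure_pmf.expectation (sa_from M \<pi> (return_pmf (s, a)) k) (\<lambda>x. Rw M (fst x) (snd x)))"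

definition diff_policy :: "mdp \<Rightarrow> ('p::euclidean_space \<Rightarrow> nat \<Rightarrow> nat pmf) \<Rightarrow> bool" where
  "diff_policy M pol \<longleftrightarrow> (\<forall>\<theta>. is_policy M (pol \<theta>)) \<and>
     (\<forall>s a \<theta>. (\<lambda>\<theta>'. pmf (pol \<theta>' s) a) differentiable (at \<theta>))"

definition psi :: "('p::euclidean_space \<Rightarrow> nat \<Rightarrow> nat pmf) \<Rightarrow> 'p \<Rightarrow> nat \<Rightarrow> nat \<Rightarrow> 'p" where
  "psi pol \<theta> s a = (SOME g. GDERIV (\<lambda>\<theta>'. ln (pmf (pol \<theta>' s) a)) \<theta> :> g)"

definition pg_term :: "mdp \<Rightarrow> ('p::euclidean_space \<Rightarrow> nat \<Rightarrow> nat pmf) \<Rightarrow> 'p \<Rightarrow> nat \<Rightarrow> 'p" where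
  "pg_term M pol \<theta> t = measure_pmf.expectation (sa_dist M (pol \<theta>) t)
      (\<lambda>x. Qfun M (pol \<theta>) (fst x) (snd x) *\<^sub>R psi pol \<theta> (fst x) (snd x))"

definition pg_defined :: "mdp \<Rightarrow> ('p::euclidean_space \<Rightarrow> nat \<Rightarrow> nat pmf) \<Rightarrow> 'p \<Rightarrow> bool" where
  "pg_defined M pol \<theta> \<longleftrightarrow>
     (\<forall>t. integrable (measure_pmf (sa_dist M (pol \<theta>) t))
            (\<lambda>x. Qfun M (pol \<theta>) (fst x) (snd x) *\<^sub>R psi pol \<theta> (fst x) (snd x))) \<and>
     summable (pg_term M pol \<theta>)"

definition pg :: "mdp \<Rightarrow> ('p::euclidean_space \<Rightarrow> nat \<Rightarrow> nat pmf) \<Rightarrow> 'p \<Rightarrow> 'p" where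
  "pg M pol \<theta> = (\<Sum>t. pg_term M pol \<theta> t)"

end

theory Submission
  imports Defs
begin

text \<open>
  From the start state 0, action 1 leads to state 2 and
  any other action ends the episode; in state 2, action 1 earns R, and every action ends the
  episode. Action 1 is taken with probability p = logistic (theta . u) in state 0 and
  q = logistic (theta . v) in state 2, for orthogonal directions u and v. The expected sum of
  psi Q is then  gamma R p (1 - p) q u + R p q (1 - q) v,  which differs from the gradient of
  R p q by  G = (gamma - 1) R p (1 - p) q u.  If it were the gradient of some J, then G would be
  the gradient of J - R p q. Since G is orthogonal to v, that function is invariant under
  translation by v, and hence so is the u-component of its gradient; but for gamma < 1 this
  component of G depends on q.
\<close>

definition logistic :: "real \<Rightarrow> real" where
  "logistic x = 1 / (1 + exp (- x))"

lemma logistic_pos: "0 < logistic x"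
  unfolding logistic_def by (simp add: add_pos_pos)

lemma logistic_less_1: "logistic x < 1"
  unfolding logistic_def by (simp add: add_pos_pos)

lemmas logistic_bounds = logistic_pos[THEN less_imp_le] logistic_less_1[THEN less_imp_le]

lemma logistic_eq_iff: "logistic x = logistic y \<longleftrightarrow> x = y"
  unfolding logistic_def by (auto simp: add_pos_pos)

lemma has_real_derivative_logistic: "(logistic has_real_derivative logistic x * (1 - logistic x)) (at x)"
proof -
  have pos: "1 + exp (- x) \<noteq> 0"
    using exp_gt_zero[of "- x"] by linarith
  have "((\<lambda>x. 1 / (1 + exp (- x))) has_real_derivative exp (- x) / (1 + exp (- x))\<^sup>2) (at x)"
    by (rule derivative_eq_intros refl | use pos in \<open>simp add: power2_eq_square\<close>)+
  also have "exp (- x) / (1 + exp (- x))\<^sup>2 = logistic x * (1 - logistic x)"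
    unfolding logistic_def using pos by (simp add: field_simps power2_eq_square)
  finally show ?thesis
    unfolding logistic_def[abs_def] .
qed

lemma has_real_derivative_ln_logistic:
  "((\<lambda>x. ln (logistic x)) has_real_derivative 1 - logistic x) (at x)"
  using DERIV_chain2[OF DERIV_ln_divide[OF logistic_pos] has_real_derivative_logistic]
  by (simp add: logistic_pos less_imp_neq[symmetric])

definition bernoulli_nat_pmf :: "real \<Rightarrow> nat pmf" where
  "bernoulli_nat_pmf p = map_pmf of_bool (bernoulli_pmf p)"

lemma set_pmf_bernoulli_nat_pmf: "set_pmf (bernoulli_nat_pmf p) \<subseteq> {0, 1}"
  unfolding bernoulli_nat_pmf_def by auto

lemma pmf_bernoulli_nat_pmf:
  assumes "0 \<le> p" "p \<le> 1"
  shows "pmf (bernoulli_nat_pmf p) a = (if a = 1 then p else if a = 0 then 1 - p else 0)"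
proof -
  have inj: "inj (of_bool :: bool \<Rightarrow> nat)"
    by (auto simp: inj_def)
  show ?thesis
  proof (cases "a \<in> {0, 1}")
    case True
    then show ?thesis
      using pmf_map_inj'[OF inj, of "bernoulli_pmf p" True] pmf_map_inj'[OF inj, of "bernoulli_pmf p" False]
      by (auto simp: bernoulli_nat_pmf_def assms)
  next
    case False
    then have "a \<notin> set_pmf (bernoulli_nat_pmf p)"
      using set_pmf_bernoulli_nat_pmf by blast
    with False show ?thesis
      by (auto simp: set_pmf_iff)
  qed
qed

lemma expectation_bernoulli_nat_pmf:
  fixes f :: "nat \<Rightarrow> 'b::{banach, second_countable_topology}"
  assumes "0 \<le> p" "p \<le> 1"
  shows "measure_pmf.expectation (bernoulli_nat_pmf p) f = p *\<^sub>R f 1 + (1 - p) *\<^sub>R f 0"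
  unfolding bernoulli_nat_pmf_def integral_map_pmf
  by (subst integral_measure_pmf[of UNIV]) (auto simp: UNIV_bool assms)

lemma GDERIV_unique:
  assumes "GDERIV f x :> D" and "GDERIV f x :> D'"
  shows "D = D'"
proof -
  have "(\<lambda>h. h \<bullet> D) = (\<lambda>h. h \<bullet> D')"
    using has_derivative_unique assms unfolding gderiv_def by blast
  then have "(D - D') \<bullet> D = (D - D') \<bullet> D'"
    by metis
  then have "(D - D') \<bullet> (D - D') = 0"
    by (simp add: inner_diff_right)
  then show ?thesis
    by simp
qed

lemma GDERIV_inner_left: "GDERIV (\<lambda>x. x \<bullet> e) x :> e"
  unfolding gderiv_def by (rule bounded_linear_imp_has_derivative) (rule bounded_linear_inner_left)

lemma GDERIV_imp_has_real_derivative_along_line: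
  assumes "GDERIV f (a + t *\<^sub>R v) :> D"
  shows "((\<lambda>t. f (a + t *\<^sub>R v)) has_real_derivative v \<bullet> D) (at t)"
proof -
  have line: "((\<lambda>t. a + t *\<^sub>R v) has_derivative (\<lambda>s. s *\<^sub>R v)) (at t)"
    by (rule derivative_eq_intros refl)+ simp
  have "((f \<circ> (\<lambda>t. a + t *\<^sub>R v)) has_derivative (\<lambda>h. h \<bullet> D) \<circ> (\<lambda>s. s *\<^sub>R v)) (at t)"
    by (rule diff_chain_at[OF line]) (use assms in \<open>simp add: gderiv_def\<close>)
  moreover have "(\<lambda>h. h \<bullet> D) \<circ> (\<lambda>s. s *\<^sub>R v) = (*) (v \<bullet> D)"
    by (auto simp: fun_eq_iff mult.commute)
  ultimately show ?thesis
    unfolding has_field_derivative_def by (simp add: o_def)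
qed

lemma GDERIV_orthogonal_imp_translation_invariant:
  assumes grad: "\<And>x. GDERIV f x :> G x" and orth: "\<And>x. v \<bullet> G x = 0"
  shows "f (a + v) = f a"
proof -
  have "((\<lambda>t. f (a + t *\<^sub>R v)) has_real_derivative 0) (at t)" for t
    using GDERIV_imp_has_real_derivative_along_line[OF grad] orth by metis
  then have "f (a + 1 *\<^sub>R v) = f (a + 0 *\<^sub>R v)"
    using DERIV_isconst_all[of "\<lambda>t. f (a + t *\<^sub>R v)" 1 0] by blast
  then show ?thesis
    by simp
qed

lemma GDERIV_orthogonal_imp_component_translation_invariant:
  assumes grad: "\<And>x. GDERIV f x :> G x" and orth: "\<And>x. v \<bullet> G x = 0"
  shows "u \<bullet> G (a + v) = u \<bullet> G a"
proof -
  have "f (a + v + t *\<^sub>R u) = f (a + t *\<^sub>R u)" for t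
    using GDERIV_orthogonal_imp_translation_invariant[OF grad orth, of "a + t *\<^sub>R u"]
    by (simp add: ac_simps)
  moreover have "((\<lambda>t. f (a + v + t *\<^sub>R u)) has_real_derivative u \<bullet> G (a + v)) (at 0)"
    using GDERIV_imp_has_real_derivative_along_line[of f "a + v" 0 u, OF grad] by simp
  moreover have "((\<lambda>t. f (a + t *\<^sub>R u)) has_real_derivative u \<bullet> G a) (at 0)"
    using GDERIV_imp_has_real_derivative_along_line[of f a 0 u, OF grad] by simp
  ultimately show ?thesis
    using DERIV_unique by simp
qed

lemma GDERIV_logistic_inner:
  "GDERIV (\<lambda>x. logistic (x \<bullet> e)) x :> (logistic (x \<bullet> e) * (1 - logistic (x \<bullet> e))) *\<^sub>R e"
  by (rule GDERIV_DERIV_compose[OF GDERIV_inner_left has_real_derivative_logistic])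

lemma GDERIV_ln_logistic_inner:
  "GDERIV (\<lambda>x. ln (logistic (x \<bullet> e))) x :> (1 - logistic (x \<bullet> e)) *\<^sub>R e"
  by (rule GDERIV_DERIV_compose[OF GDERIV_inner_left has_real_derivative_ln_logistic])

lemma psi_eqI:
  assumes "GDERIV (\<lambda>\<theta>'. ln (pmf (pol \<theta>' s) a)) \<theta> :> g"
  shows "psi pol \<theta> s a = g"
  unfolding psi_def using assms GDERIV_unique by blast

lemma sa_from_Suc_shift: "sa_from M \<pi> d (Suc n) = sa_from M \<pi> (bind_pmf d (sa_step M \<pi>)) n"
  by (induction n) auto

lemma finite_set_pmf_sa_from:
  assumes "finite (set_pmf d)" and "\<And>s a. finite (set_pmf (Tr M s a))"
    and "\<And>s. finite (set_pmf (\<pi> s))"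
  shows "finite (set_pmf (sa_from M \<pi> d n))"
  by (induction n) (auto simp: assms sa_step_def)

lemma Qfun_eq_finite_sum:
  assumes "\<And>k x. n \<le> k \<Longrightarrow> x \<in> set_pmf (sa_from M \<pi> (return_pmf (s, a)) k) \<Longrightarrow> Rw M (fst x) (snd x) = 0"
  shows "Qfun M \<pi> s a = (\<Sum>k<n. Disc M ^ k *
           measure_pmf.expectation (sa_from M \<pi> (return_pmf (s, a)) k) (\<lambda>x. Rw M (fst x) (snd x)))"
  unfolding Qfun_def
proof (rule suminf_finite)
  fix k assume "k \<notin> {..<n}"
  then have "measure_pmf.expectation (sa_from M \<pi> (return_pmf (s, a)) k) (\<lambda>x. Rw M (fst x) (snd x)) = 0"
    using assms by (subst integral_measure_pmf[of "{}"]) (auto simp: not_less)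
  then show "Disc M ^ k * measure_pmf.expectation (sa_from M \<pi> (return_pmf (s, a)) k)
               (\<lambda>x. Rw M (fst x) (snd x)) = 0"
    by simp
qed simp

definition two_choice_mdp :: "real \<Rightarrow> real \<Rightarrow> mdp" where
  "two_choice_mdp R \<gamma> =
     \<lparr>St = UNIV, Ac = UNIV,
      Tr = (\<lambda>s a. return_pmf (if (s, a) = (0, 1) then 2 else 1)),
      Rw = (\<lambda>s a. if (s, a) = (2, 1) then R else 0),
      D0 = return_pmf 0, Term = 1, Disc = \<gamma>\<rparr>"

lemma two_choice_mdp_simps [simp]:
  "St (two_choice_mdp R \<gamma>) = UNIV" "Ac (two_choice_mdp R \<gamma>) = UNIV"
  "Tr (two_choice_mdp R \<gamma>) s a = return_pmf (if (s, a) = (0, 1) then 2 else 1)"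
  "Rw (two_choice_mdp R \<gamma>) s a = (if (s, a) = (2, 1) then R else 0)"
  "D0 (two_choice_mdp R \<gamma>) = return_pmf 0" "Term (two_choice_mdp R \<gamma>) = 1"
  "Disc (two_choice_mdp R \<gamma>) = \<gamma>"
  by (simp_all add: two_choice_mdp_def)

lemma sa_step_two_choice_mdp:
  "sa_step (two_choice_mdp R \<gamma>) \<pi> x =
     (let s' = if x = (0, 1) then 2 else 1 in map_pmf (\<lambda>a'. (s', a')) (\<pi> s'))"
  by (simp add: sa_step_def bind_return_pmf Let_def prod_eq_iff)

lemma two_choice_mdp_terminal_after_step:
  assumes "\<And>y. y \<in> set_pmf d \<Longrightarrow> y \<noteq> (0, 1)"
    and "x \<in> set_pmf (sa_from (two_choice_mdp R \<gamma>) \<pi> d (Suc k))"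
  shows "fst x = 1"
  using assms(2)
proof (induction k arbitrary: x)
  case 0
  then show ?case
    using assms(1) by (auto simp: sa_step_two_choice_mdp Let_def split: if_splits)
next
  case (Suc k)
  then obtain y where y: "y \<in> set_pmf (sa_from (two_choice_mdp R \<gamma>) \<pi> d (Suc k))"
    and x: "x \<in> set_pmf (sa_step (two_choice_mdp R \<gamma>) \<pi> y)"
    by auto
  have "y \<noteq> (0, 1)"
    using Suc.IH[OF y] by auto
  with x show ?case
    by (auto simp: sa_step_two_choice_mdp)
qed

lemma two_choice_mdp_terminal_after_two_steps:
  assumes "x \<in> set_pmf (sa_from (two_choice_mdp R \<gamma>) \<pi> d (Suc (Suc k)))"
  shows "fst x = 1"
  using assms unfolding sa_from_Suc_shift[of _ _ d]
  by (rule two_choice_mdp_terminal_after_step[rotated])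
     (auto simp: sa_step_two_choice_mdp Let_def split: if_splits)

lemma two_choice_mdp_in_class:
  assumes "0 \<le> R"
  shows "two_choice_mdp R \<gamma> \<in> mdp_class R \<gamma>"
proof -
  have "summable (prob_nonterm (two_choice_mdp R \<gamma>) \<pi>)" for \<pi>
  proof (rule summable_finite[of "{0, 1}"])
    fix t :: nat assume "t \<notin> {0, 1}"
    then have t: "t = Suc (Suc (t - 2))"
      by auto
    have "fst x = 1" if "x \<in> set_pmf (sa_dist (two_choice_mdp R \<gamma>) \<pi> t)" for x
      using that unfolding sa_dist_def
      by (subst (asm) t) (rule two_choice_mdp_terminal_after_two_steps)
    then have "disjnt (set_pmf (sa_dist (two_choice_mdp R \<gamma>) \<pi> t)) {x. fst x \<noteq> Term (two_choice_mdp R \<gamma>)}"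
      by (auto simp: disjnt_def)
    then show "prob_nonterm (two_choice_mdp R \<gamma>) \<pi> t = 0"
      unfolding prob_nonterm_def by (simp add: measure_pmf_zero_iff disjnt_def)
  qed simp
  moreover have "episodic_mdp R \<gamma> (two_choice_mdp R \<gamma>)"
    unfolding episodic_mdp_def using assms by auto
  ultimately show ?thesis
    unfolding mdp_class_def by blast
qed

lemma Qfun_two_choice_mdp_immediate:
  assumes "(s, a) \<noteq> (0, 1)"
  shows "Qfun (two_choice_mdp R \<gamma>) \<pi> s a = Rw (two_choice_mdp R \<gamma>) s a"
proof -
  have late: "Rw (two_choice_mdp R \<gamma>) (fst x) (snd x) = 0"
    if "1 \<le> k" and "x \<in> set_pmf (sa_from (two_choice_mdp R \<gamma>) \<pi> (return_pmf (s, a)) k)" for k x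
  proof -
    from that have "x \<in> set_pmf (sa_from (two_choice_mdp R \<gamma>) \<pi> (return_pmf (s, a)) (Suc (k - 1)))"
      by simp
    then have "fst x = 1"
      by (rule two_choice_mdp_terminal_after_step[rotated]) (use assms in simp)
    then show ?thesis
      by simp
  qed
  have "Qfun (two_choice_mdp R \<gamma>) \<pi> s a = (\<Sum>k<1. \<gamma> ^ k *
      measure_pmf.expectation (sa_from (two_choice_mdp R \<gamma>) \<pi> (return_pmf (s, a)) k)
        (\<lambda>x. Rw (two_choice_mdp R \<gamma>) (fst x) (snd x)))"
    using Qfun_eq_finite_sum[of 1, OF late] by simp
  also have "\<dots> = Rw (two_choice_mdp R \<gamma>) s a"
    by simp
  finally show ?thesis .
qed

lemma Qfun_two_choice_mdp_start: "Qfun (two_choice_mdp R \<gamma>) \<pi> 0 1 = \<gamma> * R * pmf (\<pi> 2) 1"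
proof -
  have late: "Rw (two_choice_mdp R \<gamma>) (fst x) (snd x) = 0"
    if "2 \<le> k" and "x \<in> set_pmf (sa_from (two_choice_mdp R \<gamma>) \<pi> (return_pmf (0, 1)) k)" for k x
  proof -
    from that have "x \<in> set_pmf (sa_from (two_choice_mdp R \<gamma>) \<pi> (return_pmf (0, 1)) (Suc (Suc (k - 2))))"
      by (simp add: Suc_diff_Suc numeral_2_eq_2)
    then have "fst x = 1"
      by (rule two_choice_mdp_terminal_after_two_steps)
    then show ?thesis
      by simp
  qed
  have "Qfun (two_choice_mdp R \<gamma>) \<pi> 0 1 = (\<Sum>k<2. \<gamma> ^ k *
      measure_pmf.expectation (sa_from (two_choice_mdp R \<gamma>) \<pi> (return_pmf (0, 1)) k)
        (\<lambda>x. Rw (two_choice_mdp R \<gamma>) (fst x) (snd x)))"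
    using Qfun_eq_finite_sum[of 2, OF late] by simp
  also have "\<dots> = \<gamma> * measure_pmf.expectation (\<pi> 2) (\<lambda>a'. if a' = 1 then R else 0)"
    by (simp add: numeral_2_eq_2 bind_return_pmf sa_step_two_choice_mdp)
  also have "measure_pmf.expectation (\<pi> 2) (\<lambda>a'. if a' = 1 then R else 0) = R * pmf (\<pi> 2) 1"
    by (subst integral_measure_pmf[of "{1}"]) (auto split: if_splits)
  finally show ?thesis
    by simp
qed

definition logistic_policy :: "'p::real_inner \<Rightarrow> 'p \<Rightarrow> 'p \<Rightarrow> nat \<Rightarrow> nat pmf" where
  "logistic_policy u v \<theta> s =
     (if s = 0 then bernoulli_nat_pmf (logistic (\<theta> \<bullet> u))
      else if s = 2 then bernoulli_nat_pmf (logistic (\<theta> \<bullet> v))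
      else return_pmf 0)"

lemma pmf_logistic_policy:
  "pmf (logistic_policy u v \<theta> s) a =
     (if s = 0 then (if a = 1 then logistic (\<theta> \<bullet> u) else if a = 0 then 1 - logistic (\<theta> \<bullet> u) else 0)
      else if s = 2 then (if a = 1 then logistic (\<theta> \<bullet> v) else if a = 0 then 1 - logistic (\<theta> \<bullet> v) else 0)
      else if a = 0 then 1 else 0)"
  unfolding logistic_policy_def by (simp add: pmf_bernoulli_nat_pmf logistic_bounds)

lemma finite_set_pmf_logistic_policy: "finite (set_pmf (logistic_policy u v \<theta> s))"
  unfolding logistic_policy_def
  using finite_subset[OF set_pmf_bernoulli_nat_pmf] by auto

lemma diff_policy_logistic_policy: "diff_policy (two_choice_mdp R \<gamma>) (logistic_policy u v)"
  unfolding diff_policy_def is_policy_def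
proof (intro conjI allI)
  have "(\<lambda>\<theta>. logistic (\<theta> \<bullet> e)) differentiable (at \<theta>)" for e \<theta> :: 'a
    using GDERIV_logistic_inner unfolding gderiv_def differentiable_def by blast
  then show "(\<lambda>\<theta>'. pmf (logistic_policy u v \<theta>' s) a) differentiable (at \<theta>)" for s a \<theta>
    unfolding pmf_logistic_policy
    by (cases "s = 0"; cases "s = 2"; cases "a = 0"; cases "a = 1"; simp add: differentiable_diff)
qed simp

lemma psi_logistic_policy:
  "psi (logistic_policy u v) \<theta> 0 1 = (1 - logistic (\<theta> \<bullet> u)) *\<^sub>R u"
  "psi (logistic_policy u v) \<theta> 2 1 = (1 - logistic (\<theta> \<bullet> v)) *\<^sub>R v"
  by (simp_all add: psi_eqI pmf_logistic_policy GDERIV_ln_logistic_inner)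

lemma Qfun_two_choice_mdp_logistic_policy:
  "Qfun (two_choice_mdp R \<gamma>) (logistic_policy u v \<theta>) s a =
     (if (s, a) = (0, 1) then \<gamma> * R * logistic (\<theta> \<bullet> v) else if (s, a) = (2, 1) then R else 0)"
proof (cases "(s, a) = (0, 1)")
  case True
  then show ?thesis
    using Qfun_two_choice_mdp_start[of R \<gamma> "logistic_policy u v \<theta>"] by (simp add: pmf_logistic_policy)
next
  case False
  then show ?thesis
    by (auto simp: Qfun_two_choice_mdp_immediate)
qed

lemma pg_term_two_choice_mdp_0:
  "pg_term (two_choice_mdp R \<gamma>) (logistic_policy u v) \<theta> 0 =
     (\<gamma> * R * logistic (\<theta> \<bullet> u) * (1 - logistic (\<theta> \<bullet> u)) * logistic (\<theta> \<bullet> v)) *\<^sub>R u"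
  \<comment> \<open>One_nat_def is dropped here and below: rewriting the action 1 to Suc 0 would stop the
    rules for psi and Qfun at action 1 from matching.\<close>
  by (simp del: One_nat_def add: pg_term_def sa_dist_def bind_return_pmf logistic_policy_def logistic_bounds
      expectation_bernoulli_nat_pmf Qfun_two_choice_mdp_logistic_policy psi_logistic_policy)

lemma pg_term_two_choice_mdp_1:
  "pg_term (two_choice_mdp R \<gamma>) (logistic_policy u v) \<theta> 1 =
     (R * logistic (\<theta> \<bullet> u) * logistic (\<theta> \<bullet> v) * (1 - logistic (\<theta> \<bullet> v))) *\<^sub>R v"
proof -
  let ?M = "two_choice_mdp R \<gamma>" and ?\<pi> = "logistic_policy u v \<theta>"
  have dist: "sa_dist ?M ?\<pi> 1 = bind_pmf (bernoulli_nat_pmf (logistic (\<theta> \<bullet> u))) (\<lambda>a. sa_step ?M ?\<pi> (0, a))"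
    by (simp add: sa_dist_def bind_return_pmf bind_map_pmf logistic_policy_def)
  have "pg_term ?M (logistic_policy u v) \<theta> 1 =
      (\<Sum>a\<in>{0, 1}. pmf (bernoulli_nat_pmf (logistic (\<theta> \<bullet> u))) a *\<^sub>R
         measure_pmf.expectation (sa_step ?M ?\<pi> (0, a))
           (\<lambda>x. Qfun ?M ?\<pi> (fst x) (snd x) *\<^sub>R psi (logistic_policy u v) \<theta> (fst x) (snd x)))"
    unfolding pg_term_def dist
    by (rule pmf_expectation_bind)
       (simp_all del: One_nat_def add: set_pmf_bernoulli_nat_pmf sa_step_two_choice_mdp
         finite_set_pmf_logistic_policy)
  also have "\<dots> = (R * logistic (\<theta> \<bullet> u) * logistic (\<theta> \<bullet> v) * (1 - logistic (\<theta> \<bullet> v))) *\<^sub>R v"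
    by (simp del: One_nat_def add: pmf_bernoulli_nat_pmf logistic_bounds sa_step_two_choice_mdp
        logistic_policy_def expectation_bernoulli_nat_pmf Qfun_two_choice_mdp_logistic_policy
        psi_logistic_policy)
  finally show ?thesis .
qed

lemma pg_term_two_choice_mdp_late:
  assumes "2 \<le> t"
  shows "pg_term (two_choice_mdp R \<gamma>) (logistic_policy u v) \<theta> t = 0"
proof -
  have t: "t = Suc (Suc (t - 2))"
    using assms by arith
  have "fst x = 1" if "x \<in> set_pmf (sa_dist (two_choice_mdp R \<gamma>) (logistic_policy u v \<theta>) t)" for x
    using that unfolding sa_dist_def
    by (subst (asm) t) (rule two_choice_mdp_terminal_after_two_steps)
  then show ?thesis
    unfolding pg_term_def
    by (subst integral_measure_pmf[of "{}"]) (auto simp: Qfun_two_choice_mdp_logistic_policy)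
qed

lemma pg_defined_two_choice_mdp: "pg_defined (two_choice_mdp R \<gamma>) (logistic_policy u v) \<theta>"
  unfolding pg_defined_def
proof
  show "\<forall>t. integrable (measure_pmf (sa_dist (two_choice_mdp R \<gamma>) (logistic_policy u v \<theta>) t))
    (\<lambda>x. Qfun (two_choice_mdp R \<gamma>) (logistic_policy u v \<theta>) (fst x) (snd x) *\<^sub>R
         psi (logistic_policy u v) \<theta> (fst x) (snd x))"
    unfolding sa_dist_def
    by (intro allI integrable_measure_pmf_finite finite_set_pmf_sa_from)
       (simp_all add: finite_set_pmf_logistic_policy)
  show "summable (pg_term (two_choice_mdp R \<gamma>) (logistic_policy u v) \<theta>)"
    by (rule summable_finite[of "{0, 1}"]) (auto intro: pg_term_two_choice_mdp_late)
qed

lemma pg_two_choice_mdp: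
  "pg (two_choice_mdp R \<gamma>) (logistic_policy u v) \<theta> =
     (\<gamma> * R * logistic (\<theta> \<bullet> u) * (1 - logistic (\<theta> \<bullet> u)) * logistic (\<theta> \<bullet> v)) *\<^sub>R u +
     (R * logistic (\<theta> \<bullet> u) * logistic (\<theta> \<bullet> v) * (1 - logistic (\<theta> \<bullet> v))) *\<^sub>R v"
proof -
  have "pg (two_choice_mdp R \<gamma>) (logistic_policy u v) \<theta> =
      (\<Sum>t\<in>{0, 1}. pg_term (two_choice_mdp R \<gamma>) (logistic_policy u v) \<theta> t)"
    unfolding pg_def by (rule suminf_finite) (auto intro: pg_term_two_choice_mdp_late)
  then show ?thesis
    by (simp del: One_nat_def add: pg_term_two_choice_mdp_0 pg_term_two_choice_mdp_1)
qed

lemma pg_two_choice_mdp_not_gradient: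
  fixes u v :: "'a::euclidean_space"
  assumes "R \<noteq> 0" and "\<gamma> \<noteq> 1" and "u \<noteq> 0" and "v \<noteq> 0" and "u \<bullet> v = 0"
  shows "\<nexists>J. \<forall>\<theta>. GDERIV J \<theta> :> pg (two_choice_mdp R \<gamma>) (logistic_policy u v) \<theta>"
proof
  assume "\<exists>J. \<forall>\<theta>. GDERIV J \<theta> :> pg (two_choice_mdp R \<gamma>) (logistic_policy u v) \<theta>"
  then obtain J where J: "\<And>\<theta>. GDERIV J \<theta> :> pg (two_choice_mdp R \<gamma>) (logistic_policy u v) \<theta>"
    by blast
  define G where "G \<theta> =
    ((\<gamma> - 1) * R * logistic (\<theta> \<bullet> u) * (1 - logistic (\<theta> \<bullet> u)) * logistic (\<theta> \<bullet> v)) *\<^sub>R u" for \<theta>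
  have "GDERIV (\<lambda>\<theta>. J \<theta> - R * (logistic (\<theta> \<bullet> u) * logistic (\<theta> \<bullet> v))) \<theta> :> G \<theta>" for \<theta>
  proof (rule GDERIV_subst)
    show "GDERIV (\<lambda>\<theta>. J \<theta> - R * (logistic (\<theta> \<bullet> u) * logistic (\<theta> \<bullet> v))) \<theta> :>
        pg (two_choice_mdp R \<gamma>) (logistic_policy u v) \<theta> -
        (R *\<^sub>R (logistic (\<theta> \<bullet> u) *\<^sub>R ((logistic (\<theta> \<bullet> v) * (1 - logistic (\<theta> \<bullet> v))) *\<^sub>R v) +
                 logistic (\<theta> \<bullet> v) *\<^sub>R ((logistic (\<theta> \<bullet> u) * (1 - logistic (\<theta> \<bullet> u))) *\<^sub>R u)) +
         (logistic (\<theta> \<bullet> u) * logistic (\<theta> \<bullet> v)) *\<^sub>R 0)"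
      by (intro GDERIV_diff GDERIV_mult GDERIV_const J GDERIV_logistic_inner)
  qed (simp add: pg_two_choice_mdp G_def algebra_simps)
  moreover have "v \<bullet> G \<theta> = 0" for \<theta>
    using \<open>u \<bullet> v = 0\<close> by (simp add: G_def inner_commute)
  ultimately have "u \<bullet> G (0 + v) = u \<bullet> G 0"
    by (rule GDERIV_orthogonal_imp_component_translation_invariant)
  moreover have "(\<gamma> - 1) * R * logistic 0 * (1 - logistic 0) * (u \<bullet> u) \<noteq> 0"
    using assms logistic_pos[of 0] logistic_less_1[of 0] by simp
  ultimately have "logistic (v \<bullet> v) = logistic 0"
    by (simp add: G_def inner_commute \<open>u \<bullet> v = 0\<close>)
  with \<open>v \<noteq> 0\<close> show False
    by (simp add: logistic_eq_iff)
qed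

theorem theorem4p2:
  fixes Rmax \<gamma> :: real
  assumes "0 < Rmax" and "0 \<le> \<gamma>" and "\<gamma> < 1"
    and "DIM('p::euclidean_space) \<ge> 2"
  shows "\<not> (\<exists>J :: mdp \<Rightarrow> ('p \<Rightarrow> nat \<Rightarrow> nat pmf) \<Rightarrow> 'p \<Rightarrow> real.
            \<forall>M \<in> mdp_class Rmax \<gamma>. \<forall>pol. diff_policy M pol \<longrightarrow>
              (\<forall>\<theta>. pg_defined M pol \<theta> \<longrightarrow> GDERIV (J M pol) \<theta> :> pg M pol \<theta>))"
proof
  assume "\<exists>J :: mdp \<Rightarrow> ('p \<Rightarrow> nat \<Rightarrow> nat pmf) \<Rightarrow> 'p \<Rightarrow> real.
            \<forall>M \<in> mdp_class Rmax \<gamma>. \<forall>pol. diff_policy M pol \<longrightarrow>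
              (\<forall>\<theta>. pg_defined M pol \<theta> \<longrightarrow> GDERIV (J M pol) \<theta> :> pg M pol \<theta>)"
  then obtain J :: "mdp \<Rightarrow> ('p \<Rightarrow> nat \<Rightarrow> nat pmf) \<Rightarrow> 'p \<Rightarrow> real" where
    J: "\<forall>M \<in> mdp_class Rmax \<gamma>. \<forall>pol. diff_policy M pol \<longrightarrow>
          (\<forall>\<theta>. pg_defined M pol \<theta> \<longrightarrow> GDERIV (J M pol) \<theta> :> pg M pol \<theta>)"
    by blast
  obtain u v :: 'p where "u \<in> Basis" and "v \<in> Basis" and "u \<noteq> v"
    using assms(4) by (meson card_2_iff' ex_card subset_iff)
  then have "\<nexists>J. \<forall>\<theta>. GDERIV J \<theta> :> pg (two_choice_mdp Rmax \<gamma>) (logistic_policy u v) \<theta>"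
    using assms(1,3) by (intro pg_two_choice_mdp_not_gradient) (auto simp: inner_Basis nonzero_Basis)
  moreover have "\<forall>\<theta>. GDERIV (J (two_choice_mdp Rmax \<gamma>) (logistic_policy u v)) \<theta> :>
      pg (two_choice_mdp Rmax \<gamma>) (logistic_policy u v) \<theta>"
    using J two_choice_mdp_in_class[of Rmax \<gamma>] assms(1) diff_policy_logistic_policy pg_defined_two_choice_mdp
    by fastforce
  ultimately show False
    by blast
qed

end
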